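(* Let $p_1,\dots,p_4\in\mathbb R^2$ be in general position. For $i\ne j$, define $$w_{ij}=\frac{1}{\det(p_i,p_j,p_k)\det(p_i,p_j,p_l)},$$ where $\{k,l\}=\{1,2,3,4\}\setminus\{i,j\}$, and define $\alpha_i=\sum_{j\ne i}w_{ij}|p_i-p_j|$. Then the $w_{ij}$ and $\alpha_i$ form a stress of the complete marked graph on the four points, with the following signs: - $w_{ij}>0$ if $p_ip_j$ is an edge of the boundary of $\operatorname{conv}\{p_1,\dots,p_4\}$, and $w_{ij}<0$ otherwise; - $\alpha_i>0$ if $p_i$ is a vertex of $\operatorname{conv}\{p_1,\dots,p_4\}$, and $\alpha_i<0$ if $p_i$ lies in its interior.
   Context: For $x,y,z\in\mathbb R^2$, $\det(x,y,z)$ is the determinant of the $3\times3$ matrix with columns $(x,1),(y,1),(z,1)$, i.e. twice the signed area of the triangle $xyz$. General position means no three of the points are collinear. A stress on a marked graph with edge set $E$ and marked vertex set $V$ is an assignment of scalars $w_{ij}$ ($ij\in E$) and $\alpha_i$ ($i\in V$) such that, for all $(v,t)\in(\mathbb R^2)^4\times\mathbb R^4$, $$\sum_{ij\in E}w_{ij}\big(\langle p_i-p_j,v_i-v_j\rangle-|p_i-p_j|(t_i+t_j)\big)+\sum_{i\in V}\alpha_it_i=0.$$ *)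

theory Defs
  imports "HOL-Analysis.Analysis"
begin

text \<open>det(x,y,z): determinant of the 3x3 matrix with columns (x,1),(y,1),(z,1),
  written out by cofactor expansion along the last row.\<close>
definition det3 :: "real^2 \<Rightarrow> real^2 \<Rightarrow> real^2 \<Rightarrow> real" where
  "det3 x y z = (x$1 * (y$2 - z$2) - y$1 * (x$2 - z$2) + z$1 * (x$2 - y$2))"

definition wt :: "(nat \<Rightarrow> real^2) \<Rightarrow> nat \<Rightarrow> nat \<Rightarrow> real" where
  "wt p i j = (let k = Min ({1..4} - {i, j}); l = Max ({1..4} - {i, j})
               in 1 / (det3 (p i) (p j) (p k) * det3 (p i) (p j) (p l)))"

definition alph :: "(nat \<Rightarrow> real^2) \<Rightarrow> nat \<Rightarrow> real" where
  "alph p i = (\<Sum>j\<in>{1..4} - {i}. wt p i j * norm (p i - p j))"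

text \<open>Stress on a marked graph with edge set E (pairs (i,j), each edge listed once)
  and marked vertex set V.\<close>
definition is_stress :: "(nat \<times> nat) set \<Rightarrow> nat set \<Rightarrow> (nat \<Rightarrow> real^2)
    \<Rightarrow> (nat \<Rightarrow> nat \<Rightarrow> real) \<Rightarrow> (nat \<Rightarrow> real) \<Rightarrow> bool" where
  "is_stress E V p w \<alpha> \<longleftrightarrow>
     (\<forall>(v :: nat \<Rightarrow> real^2) (t :: nat \<Rightarrow> real).
        (\<Sum>(i,j)\<in>E. w i j * (inner (p i - p j) (v i - v j) - norm (p i - p j) * (t i + t j)))
        + (\<Sum>i\<in>V. \<alpha> i * t i) = 0)"

end

theory Submission
  imports Defs
begin

text \<open>
  For four points a, b, c, d in general position the cofactors
  l_a = det(b,c,d), l_b = -det(a,c,d), l_c = det(a,b,d), l_d = -det(a,b,c)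
  form an affine dependence: they sum to 0 and l_a a + l_b b + l_c c + l_d d = 0. Seen from a,
  the coefficients l_b, l_c, l_d are det3 a d c, det3 a b d, det3 a c b. The weights are
  w_xy = - l_x l_y / (l_a l_b l_c l_d), so the dependence yields the equilibrium
  sum_y w_xy (x - y) = 0 at every vertex x. This cancels the velocity part of the stress
  condition, and alpha is defined precisely so as to cancel the remaining part.

  The edge xy lies on the boundary of the hull iff the other two points lie on the same side
  of the line xy, i.e. iff w_xy > 0. Finally
  alpha_a = -(l_b |a - b| + l_c |a - c| + l_d |a - d|) / (l_b l_c l_d). The vectors l_y (y - a)
  sum to zero and are pairwise independent, so their lengths satisfy the strict triangle
  inequalities. Hence the numerator has the sign of the majority of l_b, l_c, l_d, and
  alpha_a < 0 exactly when these three agree in sign, i.e. when a lies in the triangle bcd.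
\<close>

section \<open>Determinants and collinearity\<close>

lemma det3_swap: "det3 b a c = - det3 a b c"
  by (simp add: det3_def algebra_simps)

lemma det3_convex_right: "det3 a b ((1 - t) *\<^sub>R c + t *\<^sub>R d) = (1 - t) * det3 a b c + t * det3 a b d"
  by (simp add: det3_def algebra_simps)

lemma det3_dependence: "det3 a d c *\<^sub>R (b - a) + det3 a b d *\<^sub>R (c - a) + det3 a c b *\<^sub>R (d - a) = 0"
  by (simp add: vec_eq_iff forall_2 det3_def algebra_simps)

lemma cross_eq_0_iff_collinear:
  fixes x y :: "real^2"
  shows "x$1 * y$2 = x$2 * y$1 \<longleftrightarrow> collinear {0, x, y}"
  unfolding collinear_lemma
proof
  assume cross: "x$1 * y$2 = x$2 * y$1"
  show "x = 0 \<or> y = 0 \<or> (\<exists>k. y = k *\<^sub>R x)"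
  proof (cases "x$1 = 0")
    case True
    with cross show ?thesis
      by (cases "x$2 = 0") (auto simp: vec_eq_iff forall_2 intro!: exI[of _ "y$2 / x$2"])
  next
    case False
    with cross show ?thesis
      by (auto simp: vec_eq_iff forall_2 field_simps intro!: exI[of _ "y$1 / x$1"])
  qed
qed auto

lemma det3_eq_0_iff_collinear: "det3 a b c = 0 \<longleftrightarrow> collinear {a, b, c}"
proof -
  have "collinear {a, b, c} \<longleftrightarrow> collinear {0, a - c, b - c}"
    using collinear_3[of a c b] by (simp add: insert_commute)
  also have "\<dots> \<longleftrightarrow> (a - c)$1 * (b - c)$2 = (a - c)$2 * (b - c)$1"
    by (rule cross_eq_0_iff_collinear[symmetric])
  finally show ?thesis
    by (simp add: det3_def algebra_simps)
qed

lemma det3_eq_0_iff_in_affine_hull: "a \<noteq> b \<Longrightarrow> det3 a b x = 0 \<longleftrightarrow> x \<in> affine hull {a, b}"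
  by (simp add: det3_eq_0_iff_collinear collinear_3_affine_hull)

section \<open>Stresses from equilibria\<close>

lemma sum_ordered_pairs:
  fixes V :: "'a::linorder set"
  assumes "finite V"
  shows "(\<Sum>(i, j)\<in>{(i, j). i \<in> V \<and> j \<in> V \<and> i < j}. h i j + h j i) = (\<Sum>i\<in>V. \<Sum>j\<in>V - {i}. h i j)"
proof -
  let ?E = "{(i, j). i \<in> V \<and> j \<in> V \<and> i < j}"
  have fin: "finite ?E"
    by (rule finite_subset[of _ "V \<times> V"]) (use assms in auto)
  have offdiag: "Sigma V (\<lambda>i. V - {i}) = ?E \<union> prod.swap ` ?E"
    by auto
  have "(\<Sum>i\<in>V. \<Sum>j\<in>V - {i}. h i j) = (\<Sum>(i, j)\<in>Sigma V (\<lambda>i. V - {i}). h i j)"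
    using assms by (simp add: sum.Sigma)
  also have "\<dots> = (\<Sum>(i, j)\<in>?E. h i j) + (\<Sum>(i, j)\<in>prod.swap ` ?E. h i j)"
    unfolding offdiag by (rule sum.union_disjoint) (use fin in auto)
  also have "(\<Sum>(i, j)\<in>prod.swap ` ?E. h i j) = (\<Sum>(i, j)\<in>?E. h j i)"
    by (subst sum.reindex) (auto simp: case_prod_unfold)
  finally show ?thesis
    by (simp add: sum.distrib case_prod_unfold)
qed

lemma is_stress_of_equilibrium:
  fixes V :: "nat set"
  assumes "finite V"
    and sym: "\<And>i j. i \<in> V \<Longrightarrow> j \<in> V \<Longrightarrow> w j i = w i j"
    and equilibrium: "\<And>i. i \<in> V \<Longrightarrow> (\<Sum>j\<in>V - {i}. w i j *\<^sub>R (p i - p j)) = 0"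
    and \<alpha>: "\<And>i. i \<in> V \<Longrightarrow> \<alpha> i = (\<Sum>j\<in>V - {i}. w i j * norm (p i - p j))"
  shows "is_stress {(i, j). i \<in> V \<and> j \<in> V \<and> i < j} V p w \<alpha>"
  unfolding is_stress_def
proof (intro allI)
  fix v :: "nat \<Rightarrow> real^2" and t :: "nat \<Rightarrow> real"
  \<comment> \<open>The term of an edge ij splits into the shares h i j and h j i of its two endpoints.\<close>
  define h where "h i j = inner (w i j *\<^sub>R (p i - p j)) (v i) - w i j * norm (p i - p j) * t i" for i j
  have edge: "w i j * (inner (p i - p j) (v i - v j) - norm (p i - p j) * (t i + t j)) = h i j + h j i"
    if "i \<in> V" "j \<in> V" for i j
    using sym[OF that] by (simp add: h_def norm_minus_commute inner_diff_left inner_diff_right algebra_simps)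
  have vertex: "(\<Sum>j\<in>V - {i}. h i j) = - (\<alpha> i * t i)" if "i \<in> V" for i
  proof -
    have "(\<Sum>j\<in>V - {i}. h i j)
        = inner (\<Sum>j\<in>V - {i}. w i j *\<^sub>R (p i - p j)) (v i) - (\<Sum>j\<in>V - {i}. w i j * norm (p i - p j)) * t i"
      by (simp add: h_def inner_sum_left sum_distrib_right sum_subtractf)
    then show ?thesis
      using equilibrium[OF that] \<alpha>[OF that] by simp
  qed
  have "(\<Sum>(i, j)\<in>{(i, j). i \<in> V \<and> j \<in> V \<and> i < j}.
          w i j * (inner (p i - p j) (v i - v j) - norm (p i - p j) * (t i + t j)))
      = (\<Sum>(i, j)\<in>{(i, j). i \<in> V \<and> j \<in> V \<and> i < j}. h i j + h j i)"
    by (rule sum.cong) (auto simp: edge)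
  also have "\<dots> = - (\<Sum>i\<in>V. \<alpha> i * t i)"
    by (simp add: sum_ordered_pairs[OF \<open>finite V\<close>] vertex sum_negf)
  finally show "(\<Sum>(i, j)\<in>{(i, j). i \<in> V \<and> j \<in> V \<and> i < j}.
          w i j * (inner (p i - p j) (v i - v j) - norm (p i - p j) * (t i + t j)))
      + (\<Sum>i\<in>V. \<alpha> i * t i) = 0"
    by simp
qed

section \<open>Four points in general position\<close>

definition general_position4 :: "real^2 \<Rightarrow> real^2 \<Rightarrow> real^2 \<Rightarrow> real^2 \<Rightarrow> bool" where
  "general_position4 a b c d \<longleftrightarrow>
     det3 a b c \<noteq> 0 \<and> det3 a b d \<noteq> 0 \<and> det3 a c d \<noteq> 0 \<and> det3 b c d \<noteq> 0"

lemma general_position4D: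
  assumes "general_position4 a b c d"
  shows "det3 a d c \<noteq> 0" "det3 a b d \<noteq> 0" "det3 a c b \<noteq> 0" "a \<noteq> b" "a \<noteq> c" "a \<noteq> d"
  using assms by (auto simp: general_position4_def det3_def algebra_simps)

definition edge_weight :: "real^2 \<Rightarrow> real^2 \<Rightarrow> real^2 \<Rightarrow> real^2 \<Rightarrow> real" where
  "edge_weight a b c d = 1 / (det3 a b c * det3 a b d)"

lemma edge_weights_at_vertex:
  fixes f :: "real^2 \<Rightarrow> 'v::real_vector"
  assumes "general_position4 a b c d"
  shows "edge_weight a b c d *\<^sub>R f b + edge_weight a c b d *\<^sub>R f c + edge_weight a d b c *\<^sub>R f d
       = - (1 / (det3 a d c * det3 a b d * det3 a c b)) *\<^sub>R
           (det3 a d c *\<^sub>R f b + det3 a b d *\<^sub>R f c + det3 a c b *\<^sub>R f d)"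
proof -
  define lb lc ld where "lb = det3 a d c" and "lc = det3 a b d" and "ld = det3 a c b"
  have dets: "det3 a b c = - ld" "det3 a c d = - lb" "det3 a d b = - lc"
    unfolding lb_def lc_def ld_def by (simp_all add: det3_def algebra_simps)
  have "lb \<noteq> 0" "lc \<noteq> 0" "ld \<noteq> 0"
    using general_position4D[OF assms] by (simp_all add: lb_def lc_def ld_def)
  then have "edge_weight a b c d = - (1 / (lb * lc * ld)) * lb"
    "edge_weight a c b d = - (1 / (lb * lc * ld)) * lc"
    "edge_weight a d b c = - (1 / (lb * lc * ld)) * ld"
    by (simp_all add: edge_weight_def dets flip: lb_def lc_def ld_def)
  then show ?thesis
    by (simp add: lb_def lc_def ld_def scaleR_add_right)
qed

lemma edge_weight_equilibrium:
  assumes "general_position4 a b c d"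
  shows "edge_weight a b c d *\<^sub>R (a - b) + edge_weight a c b d *\<^sub>R (a - c)
       + edge_weight a d b c *\<^sub>R (a - d) = 0"
proof -
  have "det3 a d c *\<^sub>R (a - b) + det3 a b d *\<^sub>R (a - c) + det3 a c b *\<^sub>R (a - d)
      = - (det3 a d c *\<^sub>R (b - a) + det3 a b d *\<^sub>R (c - a) + det3 a c b *\<^sub>R (d - a))"
    by (simp add: algebra_simps)
  then show ?thesis
    using edge_weights_at_vertex[OF assms, of "\<lambda>x. a - x"] by (simp add: det3_dependence)
qed

lemma det3_zero_on_open_segment:
  assumes "det3 a b c * det3 a b d < 0"
  obtains q where "q \<in> open_segment c d" "det3 a b q = 0"
proof -
  define t where "t = det3 a b c / (det3 a b c - det3 a b d)"
  have "det3 a b c \<noteq> det3 a b d" "c \<noteq> d"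
    using assms by (metis not_square_less_zero)+
  have "0 < t" "t < 1"
    using assms by (auto simp: t_def mult_less_0_iff field_simps)
  show ?thesis
  proof (rule that)
    show "(1 - t) *\<^sub>R c + t *\<^sub>R d \<in> open_segment c d"
      using \<open>c \<noteq> d\<close> \<open>0 < t\<close> \<open>t < 1\<close> by (auto simp: in_segment)
    show "det3 a b ((1 - t) *\<^sub>R c + t *\<^sub>R d) = 0"
      unfolding det3_convex_right using \<open>det3 a b c \<noteq> det3 a b d\<close> by (simp add: t_def field_simps)
  qed
qed

lemma segment_face_of_convex_hull_if_same_side:
  assumes "0 < det3 a b c * det3 a b d"
  shows "closed_segment a b face_of convex hull {a, b, c, d}"
proof -
  have "a \<noteq> b" and cd: "{a, b, c, d} - {a, b} = {c, d}"
    using assms by (auto simp: det3_def algebra_simps)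
  have "affine hull {a, b} \<inter> convex hull {c, d} = {}"
  proof (intro equals0I)
    fix x assume "x \<in> affine hull {a, b} \<inter> convex hull {c, d}"
    then obtain t where "0 \<le> t" "t \<le> 1" "det3 a b ((1 - t) *\<^sub>R c + t *\<^sub>R d) = 0"
      using det3_eq_0_iff_in_affine_hull[OF \<open>a \<noteq> b\<close>]
      by (auto simp: segment_convex_hull[symmetric] in_segment)
    with assms show False
      unfolding det3_convex_right
      by (smt (verit) mult_le_0_iff mult_nonneg_nonneg mult_pos_pos zero_less_mult_iff
          mult_nonneg_nonpos mult_pos_neg)
  qed
  with cd show ?thesis
    unfolding segment_convex_hull by (intro face_of_convex_hulls) auto
qed

lemma same_side_if_segment_face_of_convex_hull:
  assumes "det3 a b c \<noteq> 0" "det3 a b d \<noteq> 0"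
    and face: "closed_segment a b face_of convex hull {a, b, c, d}"
  shows "0 < det3 a b c * det3 a b d"
proof (rule ccontr)
  assume "\<not> 0 < det3 a b c * det3 a b d"
  with assms(1,2) have "det3 a b c * det3 a b d < 0"
    by (simp add: linorder_not_less order_le_less)
  then obtain q where q: "q \<in> open_segment c d" "det3 a b q = 0"
    by (rule det3_zero_on_open_segment)
  have "a \<noteq> b"
    using assms(1) by (auto simp: det3_def)
  have "closed_segment a b = affine hull {a, b} \<inter> convex hull {a, b, c, d}"
    using face_of_imp_eq_affine_Int[OF convex_convex_hull face]
    by (simp add: segment_convex_hull affine_hull_convex_hull)
  moreover have "q \<in> convex hull {a, b, c, d}"
    using q(1) closed_segment_subset[of c "convex hull {a, b, c, d}" d]
    by (auto simp: hull_inc open_closed_segment)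
  ultimately have "q \<in> closed_segment a b"
    using q(2) det3_eq_0_iff_in_affine_hull[OF \<open>a \<noteq> b\<close>] by blast
  with q(1) face have "c \<in> closed_segment a b"
    unfolding face_of_def by (meson hull_inc insertCI)
  then have "c \<in> affine hull {a, b}"
    using convex_hull_subset_affine_hull by (fastforce simp: segment_convex_hull)
  with assms(1) show False
    using det3_eq_0_iff_in_affine_hull[OF \<open>a \<noteq> b\<close>] by blast
qed

lemma segment_face_of_convex_hull_iff:
  assumes "general_position4 a b c d"
  shows "closed_segment a b face_of convex hull {a, b, c, d} \<longleftrightarrow> 0 < edge_weight a b c d"
  using assms same_side_if_segment_face_of_convex_hull segment_face_of_convex_hull_if_same_side
  by (auto simp: general_position4_def edge_weight_def)

lemma in_convex_hull_3_iff_det3_signs: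
  assumes "det3 a d c \<noteq> 0" "det3 a b d \<noteq> 0" "det3 a c b \<noteq> 0"
  shows "a \<in> convex hull {b, c, d} \<longleftrightarrow>
           (0 < det3 a d c \<and> 0 < det3 a b d \<and> 0 < det3 a c b)
         \<or> (det3 a d c < 0 \<and> det3 a b d < 0 \<and> det3 a c b < 0)"
proof
  assume "a \<in> convex hull {b, c, d}"
  then obtain u v w where uvw: "0 \<le> u" "0 \<le> v" "0 \<le> w" "u + v + w = 1"
    and a: "a = u *\<^sub>R b + v *\<^sub>R c + w *\<^sub>R d"
    unfolding convex_hull_3 by blast
  have w: "w = 1 - u - v"
    using uvw(4) by simp
  \<comment> \<open>Cramer's rule: the barycentric coordinates of a are ratios of determinants.\<close>
  have "det3 a d c = u * det3 b d c" "det3 a b d = v * det3 b d c" "det3 a c b = w * det3 b d c"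
    unfolding a w by (simp_all add: det3_def algebra_simps)
  with assms uvw(1-3) show "(0 < det3 a d c \<and> 0 < det3 a b d \<and> 0 < det3 a c b)
         \<or> (det3 a d c < 0 \<and> det3 a b d < 0 \<and> det3 a c b < 0)"
    by (auto simp: zero_less_mult_iff mult_less_0_iff)
next
  assume same_sign: "(0 < det3 a d c \<and> 0 < det3 a b d \<and> 0 < det3 a c b)
         \<or> (det3 a d c < 0 \<and> det3 a b d < 0 \<and> det3 a c b < 0)"
  define lb lc ld where "lb = det3 a d c" and "lc = det3 a b d" and "ld = det3 a c b"
  have signs: "(0 < lb \<and> 0 < lc \<and> 0 < ld) \<or> (lb < 0 \<and> lc < 0 \<and> ld < 0)"
    using same_sign by (simp add: lb_def lc_def ld_def)
  then have s: "lb + lc + ld \<noteq> 0"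
    by linarith
  have "lb *\<^sub>R b + lc *\<^sub>R c + ld *\<^sub>R d = (lb + lc + ld) *\<^sub>R a"
    using det3_dependence[where b = b and c = c and d = d] by (simp add: lb_def lc_def ld_def algebra_simps)
  then have "a = (1 / (lb + lc + ld)) *\<^sub>R (lb *\<^sub>R b + lc *\<^sub>R c + ld *\<^sub>R d)"
    using s by simp
  then have "a = (lb / (lb + lc + ld)) *\<^sub>R b + (lc / (lb + lc + ld)) *\<^sub>R c + (ld / (lb + lc + ld)) *\<^sub>R d"
    by (simp add: scaleR_add_right)
  moreover have "0 \<le> lb / (lb + lc + ld)" "0 \<le> lc / (lb + lc + ld)" "0 \<le> ld / (lb + lc + ld)"
    using signs by (auto simp: zero_le_divide_iff)
  moreover have "lb / (lb + lc + ld) + lc / (lb + lc + ld) + ld / (lb + lc + ld) = 1"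
    using s by (simp add: add_divide_distrib[symmetric])
  ultimately show "a \<in> convex hull {b, c, d}"
    unfolding convex_hull_3 by blast
qed

lemma norm_add_less_if_not_collinear:
  fixes x y :: "'a::real_inner"
  assumes "\<not> collinear {0, x, y}"
  shows "norm (x + y) < norm x + norm y"
proof -
  have "norm x *\<^sub>R y \<noteq> norm y *\<^sub>R x"
  proof
    assume eq: "norm x *\<^sub>R y = norm y *\<^sub>R x"
    have "x \<noteq> 0"
      using assms by (simp add: collinear_lemma)
    then have "y = (norm y / norm x) *\<^sub>R x"
      using arg_cong[OF eq, of "\<lambda>v. (1 / norm x) *\<^sub>R v"] by simp
    then have "collinear {0, x, y}"
      unfolding collinear_lemma by blast
    with assms show False
      by contradiction
  qed
  then show ?thesis
    using norm_triangle_eq[of x y] norm_triangle_ineq[of x y] by linarith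
qed

lemma strict_triangle_inequalities:
  fixes x y z :: "real^2"
  assumes "x + y + z = 0" and "x$1 * y$2 \<noteq> x$2 * y$1"
  shows "norm x < norm y + norm z" "norm y < norm x + norm z" "norm z < norm x + norm y"
proof -
  have sums: "y + z = - x" "x + z = - y" "x + y = - z"
    using assms(1) by (simp_all add: eq_neg_iff_add_eq_0 algebra_simps)
  have z: "z = - (x + y)"
    using sums(3) by (metis minus_minus)
  have "\<not> collinear {0, y, z}" "\<not> collinear {0, x, z}" "\<not> collinear {0, x, y}"
    using assms(2) unfolding z by (auto simp: cross_eq_0_iff_collinear[symmetric] algebra_simps)
  then show "norm x < norm y + norm z" "norm y < norm x + norm z" "norm z < norm x + norm y"
    using norm_add_less_if_not_collinear sums by (metis norm_minus_cancel)+
qed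

lemma strict_triangle_sign:
  fixes X Y Z :: real
  assumes "\<bar>X\<bar> < \<bar>Y\<bar> + \<bar>Z\<bar>" "\<bar>Y\<bar> < \<bar>X\<bar> + \<bar>Z\<bar>" "\<bar>Z\<bar> < \<bar>X\<bar> + \<bar>Y\<bar>"
  shows "0 < (X + Y + Z) * (X * Y * Z) \<longleftrightarrow> (0 < X \<and> 0 < Y \<and> 0 < Z) \<or> (X < 0 \<and> Y < 0 \<and> Z < 0)"
    and "(X + Y + Z) * (X * Y * Z) < 0 \<longleftrightarrow> \<not> ((0 < X \<and> 0 < Y \<and> 0 < Z) \<or> (X < 0 \<and> Y < 0 \<and> Z < 0))"
  using assms by (cases "0 < X"; cases "0 < Y"; cases "0 < Z";
      auto simp: zero_less_mult_iff mult_less_0_iff abs_if split: if_splits)+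

lemma strict_triangle_at_vertex:
  assumes "general_position4 a b c d"
  defines "X \<equiv> det3 a d c * norm (a - b)" and "Y \<equiv> det3 a b d * norm (a - c)"
    and "Z \<equiv> det3 a c b * norm (a - d)"
  shows "\<bar>X\<bar> < \<bar>Y\<bar> + \<bar>Z\<bar>" "\<bar>Y\<bar> < \<bar>X\<bar> + \<bar>Z\<bar>" "\<bar>Z\<bar> < \<bar>X\<bar> + \<bar>Y\<bar>"
proof -
  define x y z where "x = det3 a d c *\<^sub>R (b - a)" and "y = det3 a b d *\<^sub>R (c - a)"
    and "z = det3 a c b *\<^sub>R (d - a)"
  have "x + y + z = 0"
    using det3_dependence[where b = b and c = c and d = d] by (simp add: x_def y_def z_def)
  moreover have "x$1 * y$2 - x$2 * y$1 = - (det3 a d c * det3 a b d * det3 a c b)"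
    by (simp add: x_def y_def det3_def algebra_simps)
  then have "x$1 * y$2 \<noteq> x$2 * y$1"
    using general_position4D[OF assms(1)] by (metis eq_iff_diff_eq_0 mult_eq_0_iff neg_equal_0_iff_equal)
  moreover have "norm x = \<bar>X\<bar>" "norm y = \<bar>Y\<bar>" "norm z = \<bar>Z\<bar>"
    by (simp_all add: x_def y_def z_def X_def Y_def Z_def abs_mult norm_minus_commute)
  ultimately show "\<bar>X\<bar> < \<bar>Y\<bar> + \<bar>Z\<bar>" "\<bar>Y\<bar> < \<bar>X\<bar> + \<bar>Z\<bar>" "\<bar>Z\<bar> < \<bar>X\<bar> + \<bar>Y\<bar>"
    using strict_triangle_inequalities by metis+
qed

lemma vertex_weight_sign:
  assumes "general_position4 a b c d"
  defines "\<alpha> \<equiv> edge_weight a b c d * norm (a - b) + edge_weight a c b d * norm (a - c)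
             + edge_weight a d b c * norm (a - d)"
  shows "\<alpha> < 0 \<longleftrightarrow> a \<in> convex hull {b, c, d}" and "0 < \<alpha> \<longleftrightarrow> a \<notin> convex hull {b, c, d}"
proof -
  define X Y Z where "X = det3 a d c * norm (a - b)" and "Y = det3 a b d * norm (a - c)"
    and "Z = det3 a c b * norm (a - d)"
  note nz = general_position4D[OF assms(1)]
  have pos: "0 < norm (a - b)" "0 < norm (a - c)" "0 < norm (a - d)"
    using nz by simp_all
  have "\<alpha> = - ((X + Y + Z) / (det3 a d c * det3 a b d * det3 a c b))"
    using edge_weights_at_vertex[OF assms(1), of "\<lambda>x. norm (a - x)"]
    by (simp add: \<alpha>_def X_def Y_def Z_def)
  then have "sgn \<alpha> = - sgn ((X + Y + Z) * (X * Y * Z))"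
    using pos by (simp add: X_def Y_def Z_def sgn_mult divide_inverse)
  then have "\<alpha> < 0 \<longleftrightarrow> 0 < (X + Y + Z) * (X * Y * Z)" "0 < \<alpha> \<longleftrightarrow> (X + Y + Z) * (X * Y * Z) < 0"
    by (metis neg_0_less_iff_less neg_less_0_iff_less sgn_greater sgn_less)+
  moreover have "(0 < X \<and> 0 < Y \<and> 0 < Z) \<or> (X < 0 \<and> Y < 0 \<and> Z < 0) \<longleftrightarrow> a \<in> convex hull {b, c, d}"
    using pos nz in_convex_hull_3_iff_det3_signs[where b = b and c = c and d = d]
    by (simp add: X_def Y_def Z_def zero_less_mult_iff mult_less_0_iff)
  ultimately show "\<alpha> < 0 \<longleftrightarrow> a \<in> convex hull {b, c, d}" "0 < \<alpha> \<longleftrightarrow> a \<notin> convex hull {b, c, d}"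
    using strict_triangle_sign[OF strict_triangle_at_vertex[OF assms(1), folded X_def Y_def Z_def]]
    by simp_all
qed

lemma extreme_point_of_convex_hull_insert_iff:
  assumes "finite S" "a \<notin> S"
  shows "a extreme_point_of convex hull (insert a S) \<longleftrightarrow> a \<notin> convex hull S"
proof
  assume "a extreme_point_of convex hull (insert a S)"
  then show "a \<notin> convex hull S"
    using assms(2) extreme_point_of_convex_hull hull_redundant by metis
qed (rule extreme_point_of_convex_hull_insert[OF assms(1)])

lemma in_convex_hull_if_in_interior_convex_hull_insert:
  fixes S :: "'a::euclidean_space set"
  assumes "finite S" "a \<in> interior (convex hull (insert a S))"
  shows "a \<in> convex hull S"
  using assms extreme_point_not_in_interior extreme_point_of_convex_hull_insert by blast

definition general_position :: "(nat \<Rightarrow> real^2) \<Rightarrow> nat set \<Rightarrow> bool" where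
  "general_position p I \<longleftrightarrow>
     (\<forall>i\<in>I. \<forall>j\<in>I. \<forall>k\<in>I. i \<noteq> j \<and> j \<noteq> k \<and> i \<noteq> k \<longrightarrow> \<not> collinear {p i, p j, p k})"

lemma general_position4_if_general_position:
  assumes "general_position p I" "distinct [i, j, k, l]" "{i, j, k, l} \<subseteq> I"
  shows "general_position4 (p i) (p j) (p k) (p l)"
proof -
  have "\<not> collinear {p x, p y, p z}"
    if "x \<in> I" "y \<in> I" "z \<in> I" "x \<noteq> y" "y \<noteq> z" "x \<noteq> z" for x y z
    using assms(1) that unfolding general_position_def by blast
  then show ?thesis
    unfolding general_position4_def det3_eq_0_iff_collinear using assms(2,3) by (intro conjI) auto
qed

lemma obtain_complement_pair:
  assumes "i \<in> {1..4::nat}" "j \<in> {1..4}" "i \<noteq> j"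
  obtains k l where "distinct [i, j, k, l]" "{1..4} = {i, j, k, l}"
proof -
  have "card ({1..4::nat} - {i, j}) = 2"
    using assms by (simp add: card_Diff_subset)
  then obtain k l where kl: "{1..4} - {i, j} = {k, l}" "k \<noteq> l"
    by (auto simp: card_2_iff)
  then have "k \<notin> {i, j}" "l \<notin> {i, j}"
    by blast+
  with assms(3) kl(2) have "distinct [i, j, k, l]"
    by auto
  moreover have "{1..4} = {i, j, k, l}"
    using assms(1,2) kl(1) by blast
  ultimately show ?thesis
    by (rule that)
qed

lemma obtain_complement_triple:
  assumes "i \<in> {1..4::nat}"
  obtains b c d where "distinct [i, b, c, d]" "{1..4} = {i, b, c, d}"
proof -
  define b where "b = (if i = 1 then 2 else 1 :: nat)"
  have "b \<in> {1..4}" "i \<noteq> b"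
    by (auto simp: b_def)
  then show ?thesis
    using obtain_complement_pair[OF assms] that by blast
qed

lemma wt_commute: "wt p j i = wt p i j"
proof -
  have "det3 (p j) (p i) x = - det3 (p i) (p j) x" for x
    by (rule det3_swap)
  then show ?thesis
    by (simp add: wt_def Let_def insert_commute)
qed

lemma wt_eq_edge_weight:
  assumes "{1..4} - {i, j} = {k, l}"
  shows "wt p i j = edge_weight (p i) (p j) (p k) (p l)"
  unfolding wt_def Let_def edge_weight_def assms
  by (cases "k \<le> l") (simp_all add: min_def max_def mult.commute)

lemma sum_wt_at_vertex:
  fixes f :: "nat \<Rightarrow> 'v::real_vector"
  assumes "distinct [i, b, c, d]" "{1..4} = {i, b, c, d}"
  shows "(\<Sum>j\<in>{1..4} - {i}. wt p i j *\<^sub>R f j)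
       = edge_weight (p i) (p b) (p c) (p d) *\<^sub>R f b + edge_weight (p i) (p c) (p b) (p d) *\<^sub>R f c
       + edge_weight (p i) (p d) (p b) (p c) *\<^sub>R f d"
proof -
  have "{1..4} - {i} = {b, c, d}"
    using assms by auto
  moreover have "wt p i b = edge_weight (p i) (p b) (p c) (p d)"
    "wt p i c = edge_weight (p i) (p c) (p b) (p d)"
    "wt p i d = edge_weight (p i) (p d) (p b) (p c)"
    by (rule wt_eq_edge_weight; use assms in auto)+
  ultimately show ?thesis
    using assms(1) by (simp add: add.assoc)
qed

lemma wt_equilibrium:
  assumes "general_position p {1..4}" "i \<in> {1..4}"
  shows "(\<Sum>j\<in>{1..4} - {i}. wt p i j *\<^sub>R (p i - p j)) = 0"
proof -
  obtain b c d where bcd: "distinct [i, b, c, d]" "{1..4} = {i, b, c, d}"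
    using obtain_complement_triple[OF assms(2)] .
  then have "general_position4 (p i) (p b) (p c) (p d)"
    using general_position4_if_general_position[OF assms(1)] by auto
  then show ?thesis
    unfolding sum_wt_at_vertex[OF bcd] by (rule edge_weight_equilibrium)
qed

lemma wt_sign:
  assumes "general_position p {1..4}" "i \<in> {1..4}" "j \<in> {1..4}" "i \<noteq> j"
  shows "closed_segment (p i) (p j) face_of convex hull (p ` {1..4}) \<longleftrightarrow> 0 < wt p i j"
    and "wt p i j \<noteq> 0"
proof -
  obtain k l where kl: "distinct [i, j, k, l]" "{1..4} = {i, j, k, l}"
    using obtain_complement_pair[OF assms(2-4)] .
  then have gp4: "general_position4 (p i) (p j) (p k) (p l)"
    using general_position4_if_general_position[OF assms(1)] by auto
  have wt: "wt p i j = edge_weight (p i) (p j) (p k) (p l)"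
    by (rule wt_eq_edge_weight) (use kl in auto)
  have "p ` {1..4} = {p i, p j, p k, p l}"
    by (subst kl(2)) simp
  then show "closed_segment (p i) (p j) face_of convex hull (p ` {1..4}) \<longleftrightarrow> 0 < wt p i j"
    by (simp add: wt segment_face_of_convex_hull_iff[OF gp4])
  show "wt p i j \<noteq> 0"
    using gp4 by (simp add: wt edge_weight_def general_position4_def)
qed

lemma alph_sign:
  assumes "general_position p {1..4}" "i \<in> {1..4}"
  shows "p i extreme_point_of convex hull (p ` {1..4}) \<Longrightarrow> 0 < alph p i"
    and "p i \<in> interior (convex hull (p ` {1..4})) \<Longrightarrow> alph p i < 0"
proof -
  obtain b c d where bcd: "distinct [i, b, c, d]" "{1..4} = {i, b, c, d}"
    using obtain_complement_triple[OF assms(2)] .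
  then have gp4: "general_position4 (p i) (p b) (p c) (p d)"
    using general_position4_if_general_position[OF assms(1)] by auto
  have alph: "alph p i = edge_weight (p i) (p b) (p c) (p d) * norm (p i - p b)
      + edge_weight (p i) (p c) (p b) (p d) * norm (p i - p c)
      + edge_weight (p i) (p d) (p b) (p c) * norm (p i - p d)"
    using sum_wt_at_vertex[OF bcd, of p "\<lambda>j. norm (p i - p j)"] by (simp add: alph_def)
  have hull: "p ` {1..4} = insert (p i) {p b, p c, p d}"
    by (subst bcd(2)) simp
  have "p i \<notin> {p b, p c, p d}"
    using gp4 by (auto simp: general_position4_def det3_def algebra_simps)
  then show "p i extreme_point_of convex hull (p ` {1..4}) \<Longrightarrow> 0 < alph p i"
    unfolding hull alph vertex_weight_sign(2)[OF gp4]
    by (simp add: extreme_point_of_convex_hull_insert_iff)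
  show "p i \<in> interior (convex hull (p ` {1..4})) \<Longrightarrow> alph p i < 0"
    unfolding hull alph vertex_weight_sign(1)[OF gp4]
    by (simp add: in_convex_hull_if_in_interior_convex_hull_insert)
qed

theorem mainTheorem16:
  fixes p :: "nat \<Rightarrow> real^2"
  assumes gp: "\<forall>i\<in>{1..4}. \<forall>j\<in>{1..4}. \<forall>k\<in>{1..4}.
                 i \<noteq> j \<and> j \<noteq> k \<and> i \<noteq> k \<longrightarrow> \<not> collinear {p i, p j, p k}"
  shows "is_stress {(i, j). i \<in> {1..4} \<and> j \<in> {1..4} \<and> i < j} {1..4} p (wt p) (alph p)
    \<and> (\<forall>i\<in>{1..4}. \<forall>j\<in>{1..4}. i \<noteq> j \<longrightarrow>
          (closed_segment (p i) (p j) face_of convex hull (p ` {1..4}) \<longrightarrow> wt p i j > 0)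
        \<and> (\<not> closed_segment (p i) (p j) face_of convex hull (p ` {1..4}) \<longrightarrow> wt p i j < 0))
    \<and> (\<forall>i\<in>{1..4}.
          (p i extreme_point_of convex hull (p ` {1..4}) \<longrightarrow> alph p i > 0)
        \<and> (p i \<in> interior (convex hull (p ` {1..4})) \<longrightarrow> alph p i < 0))"
proof -
  have general: "general_position p {1..4}"
    using gp unfolding general_position_def .
  have "is_stress {(i, j). i \<in> {1..4} \<and> j \<in> {1..4} \<and> i < j} {1..4} p (wt p) (alph p)"
    using wt_equilibrium[OF general] by (intro is_stress_of_equilibrium) (simp_all add: wt_commute alph_def)
  moreover have "wt p i j < 0"
    if "i \<in> {1..4}" "j \<in> {1..4}" "i \<noteq> j"
      "\<not> closed_segment (p i) (p j) face_of convex hull (p ` {1..4})" for i j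
    using wt_sign[OF general that(1-3)] that(4) by linarith
  ultimately show ?thesis
    using wt_sign(1)[OF general] alph_sign[OF general] by blast
qed

end
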